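(* Let $G$ be an influence graph that is a directed line on nodes $\{1,\dots,n\}$ with edges $(i+1,i)$ for $i=1,\dots,n-1$, and for each $i$ let $p_i$ be the probability that node $i$ reaches node $1$ in the live-edge graph. Then for every $(x_1,\dots,x_n)\in[0,1]^n$ and every $i\in\{1,\dots,n\}$, $$F_1(0,\dots,0,x_i,\dots,x_n)-F_1(0,\dots,0,x_{i+1},\dots,x_n)=x_ip_i\big(1-F_i(0,\dots,0,x_{i+1},\dots,x_n)\big),$$ where in each argument vector the first coordinates (up to position $i-1$, resp. $i$) are $0$ and coordinate $j$ equals $x_j$ for the remaining positions.
   Context: IC model: each edge $e$ has probability $p_e\in[0,1]$; a realization (live-edge graph) $\phi$ contains each edge independently with probability $p_e$, with distribution $\mathcal{P}$. $\Gamma(S,\phi)$ is the set of nodes reachable from $S$ in $\phi$. For a node $u$ and $S\subseteq\{1,\dots,n\}$, $\sigma_u(S)=\Pr_{\Phi\sim\mathcal{P}}[u\in\Gamma(S,\Phi)]$, and $F_u(y_1,\dots,y_n)=\sum_{S\subseteq[n]}\big(\prod_{j\in S}y_j\prod_{j\notin S}(1-y_j)\big)\sigma_u(S)$, i.e. the probability that $u$ is activated when each node $j$ is independently a seed with probability $y_j$. *)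

theory Defs
  imports Complex_Main
begin

text \<open>An influence graph is an edge set
  E of pairs (u,v) (edge from u to v) with edge probabilities pe. A realization
  (live-edge graph) is a subset phi of E; each edge is live independently.\<close>

definition realization_prob :: "(nat \<times> nat) set \<Rightarrow> (nat \<times> nat \<Rightarrow> real) \<Rightarrow> (nat \<times> nat) set \<Rightarrow> real" where
  "realization_prob E pe phi = (\<Prod>e\<in>phi. pe e) * (\<Prod>e\<in>E - phi. 1 - pe e)"

definition Gamma :: "nat set \<Rightarrow> (nat \<times> nat) set \<Rightarrow> nat set" where
  "Gamma S phi = {v. \<exists>s\<in>S. (s, v) \<in> phi\<^sup>*}"

definition sigma :: "(nat \<times> nat) set \<Rightarrow> (nat \<times> nat \<Rightarrow> real) \<Rightarrow> nat \<Rightarrow> nat set \<Rightarrow> real" where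
  "sigma E pe u S = (\<Sum>phi\<in>Pow E. realization_prob E pe phi * (if u \<in> Gamma S phi then 1 else 0))"

definition F :: "(nat \<times> nat) set \<Rightarrow> (nat \<times> nat \<Rightarrow> real) \<Rightarrow> nat \<Rightarrow> nat \<Rightarrow> (nat \<Rightarrow> real) \<Rightarrow> real" where
  "F E pe n u y = (\<Sum>S\<in>Pow {1..n}.
      (\<Prod>j\<in>S. y j) * (\<Prod>j\<in>{1..n} - S. 1 - y j) * sigma E pe u S)"

definition line_edges :: "nat \<Rightarrow> (nat \<times> nat) set" where
  "line_edges n = {(Suc i, i) | i. 1 \<le> i \<and> i < n}"

end

theory Submission
  imports Defs
begin

text \<open>On the line, node u is reached from S iff u is in S, or the edge (u+1, u) is live and
  u+1 is reached. Hence sigma_u(S) = 1 for u in S and sigma_u(S) = p(u+1,u) sigma_{u+1}(S)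
  otherwise, and averaging over the random seed set, F_u(y) = y_u + (1 - y_u) p(u+1,u) F_{u+1}(y).
  If y vanishes below i, the recursions for F_1(y) and sigma_1({i}) agree down to i, so
  F_1(y) = sigma_1({i}) F_i(y). The two seed vectors of the theorem differ only at i, and
  F_{i+1} does not depend on coordinate i, so the recursion at i gives
  F_i(y) - F_i(y') = x_i (1 - F_i(y')).\<close>

definition expect_subset :: "'a set \<Rightarrow> ('a \<Rightarrow> real) \<Rightarrow> ('a set \<Rightarrow> real) \<Rightarrow> real" where
  "expect_subset A q Q = (\<Sum>T\<in>Pow A. (\<Prod>a\<in>T. q a) * (\<Prod>a\<in>A - T. 1 - q a) * Q T)"

lemma expect_subset_insert:
  assumes "finite A" "a \<notin> A"
  shows "expect_subset (insert a A) q Q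
    = q a * expect_subset A q (\<lambda>T. Q (insert a T)) + (1 - q a) * expect_subset A q Q"
proof -
  let ?w = "\<lambda>T. (\<Prod>b\<in>T. q b) * (\<Prod>b\<in>insert a A - T. 1 - q b) * Q T"
  have inj: "inj_on (insert a) (Pow A)"
    using assms(2) by (intro inj_onI) (metis Diff_insert_absorb PowD subsetD)
  have "expect_subset (insert a A) q Q = sum ?w (Pow A) + sum ?w (insert a ` Pow A)"
    unfolding expect_subset_def Pow_insert
    using assms by (intro sum.union_disjoint) auto
  also have "sum ?w (Pow A) = (1 - q a) * expect_subset A q Q"
    unfolding expect_subset_def sum_distrib_left
  proof (rule sum.cong[OF refl])
    fix T assume "T \<in> Pow A"
    then have "insert a A - T = insert a (A - T)" "a \<notin> A - T" "finite (A - T)"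
      using assms by auto
    then show "?w T = (1 - q a) * ((\<Prod>b\<in>T. q b) * (\<Prod>b\<in>A - T. 1 - q b) * Q T)"
      by simp
  qed
  also have "sum ?w (insert a ` Pow A) = q a * expect_subset A q (\<lambda>T. Q (insert a T))"
    unfolding expect_subset_def sum_distrib_left sum.reindex[OF inj] o_def
  proof (rule sum.cong[OF refl])
    fix T assume "T \<in> Pow A"
    then have "insert a A - insert a T = A - T" "a \<notin> T" "finite T"
      using assms by (auto intro: finite_subset)
    then show "?w (insert a T)
        = q a * ((\<Prod>b\<in>T. q b) * (\<Prod>b\<in>A - T. 1 - q b) * Q (insert a T))"
      by simp
  qed
  finally show ?thesis by simp
qed

lemma expect_subset_cong:
  "(\<And>T. T \<subseteq> A \<Longrightarrow> Q T = Q' T) \<Longrightarrow> expect_subset A q Q = expect_subset A q Q'"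
  unfolding expect_subset_def by (rule sum.cong) auto

lemma expect_subset_const: "finite A \<Longrightarrow> expect_subset A q (\<lambda>_. c) = c"
proof (induction A rule: finite_induct)
  case empty
  then show ?case by (simp add: expect_subset_def)
next
  case (insert a A)
  then show ?case by (simp add: expect_subset_insert algebra_simps)
qed

lemma expect_subset_cmult: "expect_subset A q (\<lambda>T. c * Q T) = c * expect_subset A q Q"
  unfolding expect_subset_def sum_distrib_left by (rule sum.cong) auto

lemma sigma_eq_expect_subset:
  "sigma E pe u S = expect_subset E pe (\<lambda>phi. if u \<in> Gamma S phi then 1 else 0)"
  unfolding sigma_def expect_subset_def realization_prob_def by simp

lemma F_eq_expect_subset: "F E pe n u y = expect_subset {1..n} y (sigma E pe u)"
  unfolding F_def expect_subset_def by simp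

lemma Gamma_seed: "u \<in> S \<Longrightarrow> u \<in> Gamma S phi"
  unfolding Gamma_def by blast

lemma sigma_seed: "finite E \<Longrightarrow> u \<in> S \<Longrightarrow> sigma E pe u S = 1"
  by (simp add: sigma_eq_expect_subset Gamma_seed expect_subset_const)

lemma Gamma_no_in_edge:
  assumes "\<And>w. (w, u) \<notin> phi" "u \<notin> S"
  shows "u \<notin> Gamma S phi"
proof
  assume "u \<in> Gamma S phi"
  then obtain s where "s \<in> S" "(s, u) \<in> phi\<^sup>*" unfolding Gamma_def by blast
  with assms(2) have "s \<noteq> u" "(s, u) \<in> phi\<^sup>*" by auto
  then obtain w where "(w, u) \<in> phi" by (blast elim: rtranclE)
  with assms(1) show False by blast
qed

lemma line_edges_iff: "(a, b) \<in> line_edges n \<longleftrightarrow> a = Suc b \<and> 1 \<le> b \<and> b < n"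
  unfolding line_edges_def by auto

lemma finite_line_edges: "finite (line_edges n)"
proof -
  have "line_edges n = (\<lambda>i. (Suc i, i)) ` {1..<n}"
    unfolding line_edges_def by auto
  then show ?thesis by simp
qed

lemma line_rtrancl_le:
  assumes "phi \<subseteq> line_edges n" "(s, v) \<in> phi\<^sup>*"
  shows "v \<le> s"
  using assms(2)
proof (induction rule: rtrancl_induct)
  case base
  then show ?case by simp
next
  case (step y z)
  then have "y = Suc z" using assms(1) by (auto simp: line_edges_iff)
  then show ?case using step.IH by simp
qed

lemma line_rtrancl_insert_edge:
  assumes "phi \<subseteq> line_edges n" "(s, v) \<in> (insert (Suc u, u) phi)\<^sup>*" "Suc u \<le> v"
  shows "(s, v) \<in> phi\<^sup>*"
  using assms(2,3)
proof (induction rule: rtrancl_induct)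
  case base
  then show ?case by simp
next
  case (step y z)
  then have "(y, z) \<in> phi" by auto
  with assms(1) have "y = Suc z" by (auto simp: line_edges_iff)
  with step.IH step.prems have "(s, y) \<in> phi\<^sup>*" by simp
  then show ?case using \<open>(y, z) \<in> phi\<close> by (rule rtrancl_into_rtrancl)
qed

lemma Gamma_line_insert_edge_above:
  assumes "phi \<subseteq> line_edges n" "Suc u \<le> v"
  shows "v \<in> Gamma S (insert (Suc u, u) phi) \<longleftrightarrow> v \<in> Gamma S phi"
proof -
  have "(s, v) \<in> (insert (Suc u, u) phi)\<^sup>* \<longleftrightarrow> (s, v) \<in> phi\<^sup>*" for s
    using line_rtrancl_insert_edge[OF assms(1) _ assms(2)]
      rtrancl_mono[of phi "insert (Suc u, u) phi"]
    by blast
  then show ?thesis unfolding Gamma_def by simp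
qed

lemma Gamma_line_insert_edge_at:
  assumes "phi \<subseteq> line_edges n - {(Suc u, u)}" "u \<notin> S"
  shows "u \<in> Gamma S (insert (Suc u, u) phi) \<longleftrightarrow> Suc u \<in> Gamma S phi"
proof
  assume "u \<in> Gamma S (insert (Suc u, u) phi)"
  then obtain s where s: "s \<in> S" "(s, u) \<in> (insert (Suc u, u) phi)\<^sup>*"
    unfolding Gamma_def by blast
  with assms(2) have "s \<noteq> u" by blast
  with s(2) obtain w
    where w: "(s, w) \<in> (insert (Suc u, u) phi)\<^sup>*" "(w, u) \<in> insert (Suc u, u) phi"
    by (metis rtranclE)
  from w(2) assms(1) have "w = Suc u" by (auto simp: line_edges_iff)
  with w(1) assms(1) have "(s, Suc u) \<in> phi\<^sup>*"
    using line_rtrancl_insert_edge[of phi n s "Suc u" u] by blast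
  with s(1) show "Suc u \<in> Gamma S phi" unfolding Gamma_def by blast
next
  assume "Suc u \<in> Gamma S phi"
  then obtain s where "s \<in> S" "(s, Suc u) \<in> phi\<^sup>*" unfolding Gamma_def by blast
  then have "s \<in> S" "(s, u) \<in> (insert (Suc u, u) phi)\<^sup>*"
    using rtrancl_mono[of phi "insert (Suc u, u) phi"] by (auto intro: rtrancl_into_rtrancl)
  then show "u \<in> Gamma S (insert (Suc u, u) phi)" unfolding Gamma_def by blast
qed

lemma Gamma_line_insert_seed_below:
  assumes "phi \<subseteq> line_edges n" "u < v"
  shows "v \<in> Gamma (insert u T) phi \<longleftrightarrow> v \<in> Gamma T phi"
  using line_rtrancl_le[OF assms(1), of u v] assms(2) unfolding Gamma_def by auto

lemma sigma_line_step:
  assumes "1 \<le> u" "u < n" "u \<notin> S"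
  shows "sigma (line_edges n) pe u S = pe (Suc u, u) * sigma (line_edges n) pe (Suc u) S"
proof -
  define e where "e = (Suc u, u)"
  define E where "E = line_edges n - {e}"
  have E: "line_edges n = insert e E" "finite E" "e \<notin> E"
    using assms finite_line_edges unfolding E_def e_def by (auto simp: line_edges_iff)
  have "E \<subseteq> line_edges n" using E by blast
  let ?reach = "\<lambda>v phi. if v \<in> Gamma S phi then 1 else 0 :: real"
  have at: "expect_subset E pe (\<lambda>phi. ?reach u (insert e phi))
      = expect_subset E pe (?reach (Suc u))"
    by (rule expect_subset_cong) (simp add: Gamma_line_insert_edge_at[OF _ assms(3)] E_def e_def)
  have below: "expect_subset E pe (?reach u) = 0"
  proof -
    have "u \<notin> Gamma S phi" if "phi \<subseteq> E" for phi
    proof (rule Gamma_no_in_edge[OF _ assms(3)])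
      show "(w, u) \<notin> phi" for w
        using that by (auto simp: E_def e_def line_edges_iff)
    qed
    then have "expect_subset E pe (?reach u) = expect_subset E pe (\<lambda>_. 0)"
      by (intro expect_subset_cong) simp
    then show ?thesis using E(2) by (simp add: expect_subset_const)
  qed
  have above: "expect_subset E pe (\<lambda>phi. ?reach (Suc u) (insert e phi))
      = expect_subset E pe (?reach (Suc u))"
  proof (rule expect_subset_cong)
    fix phi assume "phi \<subseteq> E"
    with \<open>E \<subseteq> line_edges n\<close> have "phi \<subseteq> line_edges n" by blast
    then show "?reach (Suc u) (insert e phi) = ?reach (Suc u) phi"
      by (simp add: Gamma_line_insert_edge_above e_def)
  qed
  show ?thesis
    unfolding sigma_eq_expect_subset E(1) expect_subset_insert[OF E(2,3)] at below above
    by (simp add: e_def algebra_simps)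
qed

lemma sigma_line_last:
  assumes "n \<notin> S"
  shows "sigma (line_edges n) pe n S = 0"
proof -
  have "n \<notin> Gamma S phi" if "phi \<subseteq> line_edges n" for phi
  proof (rule Gamma_no_in_edge[OF _ assms])
    show "(w, n) \<notin> phi" for w
      using that by (auto simp: line_edges_iff)
  qed
  then have "sigma (line_edges n) pe n S = expect_subset (line_edges n) pe (\<lambda>_. 0)"
    unfolding sigma_eq_expect_subset by (intro expect_subset_cong) simp
  then show ?thesis by (simp add: expect_subset_const finite_line_edges)
qed

lemma sigma_line_insert_seed_below:
  "u < v \<Longrightarrow> sigma (line_edges n) pe v (insert u T) = sigma (line_edges n) pe v T"
  unfolding sigma_eq_expect_subset
  by (rule expect_subset_cong) (simp add: Gamma_line_insert_seed_below)

lemma F_line_step: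
  assumes "1 \<le> u" "u < n"
  shows "F (line_edges n) pe n u y
    = y u + (1 - y u) * pe (Suc u, u) * F (line_edges n) pe n (Suc u) y"
proof -
  define A where "A = {1..n} - {u}"
  have A: "{1..n} = insert u A" "finite A" "u \<notin> A"
    using assms unfolding A_def by auto
  have seeded: "expect_subset A y (\<lambda>T. sigma (line_edges n) pe u (insert u T)) = 1"
    by (simp add: sigma_seed finite_line_edges expect_subset_const A(2))
  have unseeded: "expect_subset A y (sigma (line_edges n) pe u)
      = expect_subset A y (\<lambda>T. pe (Suc u, u) * sigma (line_edges n) pe (Suc u) T)"
    using A(3) by (intro expect_subset_cong) (auto intro: sigma_line_step[OF assms])
  have next_node: "expect_subset A y (\<lambda>T. sigma (line_edges n) pe (Suc u) (insert u T))
      = expect_subset A y (sigma (line_edges n) pe (Suc u))"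
    by (intro expect_subset_cong) (simp add: sigma_line_insert_seed_below)
  show ?thesis
    unfolding F_eq_expect_subset A(1) expect_subset_insert[OF A(2,3)]
      seeded unseeded next_node expect_subset_cmult
    by (simp add: algebra_simps)
qed

lemma F_line_last:
  assumes "1 \<le> n"
  shows "F (line_edges n) pe n n y = y n"
proof -
  define A where "A = {1..n} - {n}"
  have A: "{1..n} = insert n A" "finite A" "n \<notin> A"
    using assms unfolding A_def by auto
  have seeded: "expect_subset A y (\<lambda>T. sigma (line_edges n) pe n (insert n T)) = 1"
    by (simp add: sigma_seed finite_line_edges expect_subset_const A(2))
  have unseeded: "expect_subset A y (sigma (line_edges n) pe n) = 0"
  proof -
    have "expect_subset A y (sigma (line_edges n) pe n) = expect_subset A y (\<lambda>_. 0)"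
      using A(3) by (intro expect_subset_cong) (auto intro: sigma_line_last)
    then show ?thesis by (simp add: expect_subset_const A(2))
  qed
  show ?thesis
    unfolding F_eq_expect_subset A(1) expect_subset_insert[OF A(2,3)] seeded unseeded
    by simp
qed

lemma F_line_cong:
  assumes "1 \<le> u" "u \<le> n" "\<And>j. u \<le> j \<Longrightarrow> j \<le> n \<Longrightarrow> y j = y' j"
  shows "F (line_edges n) pe n u y = F (line_edges n) pe n u y'"
  using assms(2,3)
proof (induction rule: inc_induct)
  case base
  from assms(1,2) have "1 \<le> n" by simp
  with base show ?case by (simp add: F_line_last)
next
  case (step v)
  with assms(1) show ?case by (simp add: F_line_step)
qed

lemma F_line_eq_sigma_mult:
  assumes "1 \<le> u" "u \<le> i" "i \<le> n" "\<And>j. j < i \<Longrightarrow> y j = 0"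
  shows "F (line_edges n) pe n u y = sigma (line_edges n) pe u {i} * F (line_edges n) pe n i y"
  using assms(2)
proof (induction rule: inc_induct)
  case base
  then show ?case by (simp add: sigma_seed finite_line_edges)
next
  case (step v)
  with assms have "1 \<le> v" "v < n" "y v = 0" "v \<notin> {i}" by auto
  with step.IH show ?case by (simp add: F_line_step sigma_line_step)
qed

lemma F_line_seed_diff:
  assumes "1 \<le> i" "i \<le> n" "y' i = 0" "\<And>j. i < j \<Longrightarrow> y' j = y j"
  shows "F (line_edges n) pe n i y - F (line_edges n) pe n i y'
    = y i * (1 - F (line_edges n) pe n i y')"
proof (cases "i < n")
  case True
  have "F (line_edges n) pe n (Suc i) y' = F (line_edges n) pe n (Suc i) y"
    using True assms(4) by (intro F_line_cong) auto
  then show ?thesis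
    using assms(1,3) True by (simp add: F_line_step algebra_simps)
next
  case False
  with assms show ?thesis by (simp add: F_line_last)
qed

theorem lemma7:
  fixes n i :: nat and pe :: "nat \<times> nat \<Rightarrow> real" and x :: "nat \<Rightarrow> real"
  assumes "\<forall>e\<in>line_edges n. 0 \<le> pe e \<and> pe e \<le> 1"
    and "\<forall>j\<in>{1..n}. 0 \<le> x j \<and> x j \<le> 1"
    and "i \<in> {1..n}"
  shows "F (line_edges n) pe n 1 (\<lambda>j. if j < i then 0 else x j)
           - F (line_edges n) pe n 1 (\<lambda>j. if j \<le> i then 0 else x j)
         = x i * sigma (line_edges n) pe 1 {i}
             * (1 - F (line_edges n) pe n i (\<lambda>j. if j \<le> i then 0 else x j))"
proof -
  define y where "y = (\<lambda>j. if j < i then 0 else x j)"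
  define y' where "y' = (\<lambda>j. if j \<le> i then 0 else x j)"
  let ?F = "F (line_edges n) pe n" and ?p = "sigma (line_edges n) pe 1 {i}"
  have i: "1 \<le> i" "i \<le> n" using assms(3) by auto
  have "?F 1 y - ?F 1 y' = ?p * (?F i y - ?F i y')"
    using i F_line_eq_sigma_mult[of 1 i n y pe] F_line_eq_sigma_mult[of 1 i n y' pe]
    by (simp add: y_def y'_def right_diff_distrib)
  also have "?F i y - ?F i y' = y i * (1 - ?F i y')"
    using i by (intro F_line_seed_diff) (auto simp: y_def y'_def)
  finally show ?thesis
    by (simp add: y_def y'_def)
qed

end
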